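(* Let $\mathbb{C}$ be a cartesian monoidal category and let $T$ be an observational commutative monad on $\mathbb{C}$. Then every deterministic morphism of the Kleisli category $\mathsf{Kl}(T)$ is thunkable.
   Context: $\mathbb{C}$ has finite products (terminal object $1$); $T=(T,\eta,\mu)$ is a commutative monad on $\mathbb{C}$, with associated symmetric monoidal structure $\nabla_{A,B}:TA\times TB\to T(A\times B)$. The Kleisli category $\mathsf{Kl}(T)$ has the objects of $\mathbb{C}$; a morphism $f:A\rightsquigarrow B$ corresponds to a morphism $f^\sharp:A\to TB$ of $\mathbb{C}$; composition is $(g\circledcirc f)^\sharp=\mu\circ T(g^\sharp)\circ f^\sharp$ and identities are $\eta$. $\mathsf{Kl}(T)$ is symmetric monoidal with tensor $\otimes$ given on objects by $\times$ and on morphisms by $(f\otimes g)^\sharp=\nabla\circ(f^\sharp\times g^\sharp)$. For each object $X$, $\mathsf{copy}_X:X\rightsquigarrow X\otimes X$ and $\mathsf{del}_X:X\rightsquigarrow 1$ are the Kleisli morphisms with $\mathsf{copy}_X^\sharp=\eta\circ\Delta_X$ and $\mathsf{del}_X^\sharp=\eta\circ !_X$. A Kleisli morphism $f:X\rightsquigarrow Y$ is copyable if $\mathsf{copy}_Y\circledcirc f=(f\otimes f)\circledcirc\mathsf{copy}_X$, discardable if $\mathsf{del}_Y\circledcirc f=\mathsf{del}_X$, and deterministic if it is both. Define $\mathsf{force}_A:TA\rightsquigarrow A$ by $\mathsf{force}_A^\sharp=1_{TA}$, $\mathsf{thunk}_A:A\rightsquigarrow TA$ by $\mathsf{thunk}_A^\sharp=\eta_{TA}\circ\eta_A$,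 and the functor $\tilde T:\mathsf{Kl}(T)\to\mathsf{Kl}(T)$ by $\tilde TA=TA$ and $(\tilde T f)^\sharp=\eta_{TB}\circ\mu_B\circ T(f^\sharp)$ for $f:A\rightsquigarrow B$. A Kleisli morphism $f:A\rightsquigarrow B$ is thunkable if $\mathsf{thunk}_B\circledcirc f=\tilde Tf\circledcirc\mathsf{thunk}_A$. For $n\in\mathbb{N}$, let $\mathsf{copy}_n:TX\rightsquigarrow (TX)^{\otimes n}$ be the Kleisli morphism with $\mathsf{copy}_n^\sharp=\eta\circ\Delta_n$ where $\Delta_n:TX\to(TX)^n$ is the $n$-fold diagonal, and define the $n$-th sampling map $\mathsf{samp}_n=\mathsf{force}^{\otimes n}\circledcirc\mathsf{copy}_n:TX\rightsquigarrow X^{\otimes n}$ (so $\mathsf{samp}_0=\mathsf{del}$, $\mathsf{samp}_1=\mathsf{force}$). $T$ is observational if for every object $X$ the family $(\mathsf{samp}_n:TX\rightsquigarrow X^{\otimes n})_{n\in\mathbb{N}}$ is jointly monic in $\mathsf{Kl}(T)$, i.e. for any $f,g:A\rightsquigarrow TX$, if $\mathsf{samp}_n\circledcirc f=\mathsf{samp}_n\circledcirc g$ for all $n$ then $f=g$. *)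

theory Defs
  imports Main
begin

text \<open>Objects have type 'o, morphisms type 'm.
c_comp C g f is the composite g after f.  Kleisli morphisms f : A ~> B are represented
by their transposes f# in c_hom C A (c_T C B).\<close>

record ('o, 'm) cmonad =
  c_ob   :: "'o set"
  c_hom  :: "'o \<Rightarrow> 'o \<Rightarrow> 'm set"
  c_comp :: "'m \<Rightarrow> 'm \<Rightarrow> 'm"
  c_id   :: "'o \<Rightarrow> 'm"
  c_one  :: "'o"
  c_bang :: "'o \<Rightarrow> 'm"
  c_prod :: "'o \<Rightarrow> 'o \<Rightarrow> 'o"
  c_p1   :: "'o \<Rightarrow> 'o \<Rightarrow> 'm"
  c_p2   :: "'o \<Rightarrow> 'o \<Rightarrow> 'm"
  c_pair :: "'m \<Rightarrow> 'm \<Rightarrow> 'm"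
  c_T    :: "'o \<Rightarrow> 'o"
  c_Tm   :: "'m \<Rightarrow> 'm"
  c_eta  :: "'o \<Rightarrow> 'm"
  c_mu   :: "'o \<Rightarrow> 'm"
  c_st   :: "'o \<Rightarrow> 'o \<Rightarrow> 'm"

definition cross :: "('o,'m) cmonad \<Rightarrow> 'o \<Rightarrow> 'o \<Rightarrow> 'm \<Rightarrow> 'm \<Rightarrow> 'm" where
  "cross C A B f g = c_pair C (c_comp C f (c_p1 C A B)) (c_comp C g (c_p2 C A B))"

definition swap :: "('o,'m) cmonad \<Rightarrow> 'o \<Rightarrow> 'o \<Rightarrow> 'm" where
  "swap C A B = c_pair C (c_p2 C A B) (c_p1 C A B)"

definition assoc :: "('o,'m) cmonad \<Rightarrow> 'o \<Rightarrow> 'o \<Rightarrow> 'o \<Rightarrow> 'm" where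
  "assoc C A B D = c_pair C (c_comp C (c_p1 C A B) (c_p1 C (c_prod C A B) D))
     (c_pair C (c_comp C (c_p2 C A B) (c_p1 C (c_prod C A B) D)) (c_p2 C (c_prod C A B) D))"

definition category :: "('o,'m) cmonad \<Rightarrow> bool" where
  "category C \<longleftrightarrow>
    (\<forall>A B f. f \<in> c_hom C A B \<longrightarrow> A \<in> c_ob C \<and> B \<in> c_ob C) \<and>
    (\<forall>A\<in>c_ob C. c_id C A \<in> c_hom C A A) \<and>
    (\<forall>A B D f g. f \<in> c_hom C A B \<longrightarrow> g \<in> c_hom C B D \<longrightarrow> c_comp C g f \<in> c_hom C A D) \<and>
    (\<forall>A B D E f g h. f \<in> c_hom C A B \<longrightarrow> g \<in> c_hom C B D \<longrightarrow> h \<in> c_hom C D E \<longrightarrow>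
        c_comp C h (c_comp C g f) = c_comp C (c_comp C h g) f) \<and>
    (\<forall>A B f. f \<in> c_hom C A B \<longrightarrow> c_comp C (c_id C B) f = f \<and> c_comp C f (c_id C A) = f)"

definition has_finite_products :: "('o,'m) cmonad \<Rightarrow> bool" where
  "has_finite_products C \<longleftrightarrow>
    c_one C \<in> c_ob C \<and>
    (\<forall>A\<in>c_ob C. c_bang C A \<in> c_hom C A (c_one C)) \<and>
    (\<forall>A f. f \<in> c_hom C A (c_one C) \<longrightarrow> f = c_bang C A) \<and>
    (\<forall>A\<in>c_ob C. \<forall>B\<in>c_ob C. c_prod C A B \<in> c_ob C \<and>
        c_p1 C A B \<in> c_hom C (c_prod C A B) A \<and> c_p2 C A B \<in> c_hom C (c_prod C A B) B) \<and>
    (\<forall>X A B f g. f \<in> c_hom C X A \<longrightarrow> g \<in> c_hom C X B \<longrightarrow>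
        c_pair C f g \<in> c_hom C X (c_prod C A B) \<and>
        c_comp C (c_p1 C A B) (c_pair C f g) = f \<and> c_comp C (c_p2 C A B) (c_pair C f g) = g) \<and>
    (\<forall>X A B h. h \<in> c_hom C X (c_prod C A B) \<longrightarrow>
        c_pair C (c_comp C (c_p1 C A B) h) (c_comp C (c_p2 C A B) h) = h)"

definition monad :: "('o,'m) cmonad \<Rightarrow> bool" where
  "monad C \<longleftrightarrow>
    (\<forall>A\<in>c_ob C. c_T C A \<in> c_ob C) \<and>
    (\<forall>A B f. f \<in> c_hom C A B \<longrightarrow> c_Tm C f \<in> c_hom C (c_T C A) (c_T C B)) \<and>
    (\<forall>A\<in>c_ob C. c_Tm C (c_id C A) = c_id C (c_T C A)) \<and>
    (\<forall>A B D f g. f \<in> c_hom C A B \<longrightarrow> g \<in> c_hom C B D \<longrightarrow>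
        c_Tm C (c_comp C g f) = c_comp C (c_Tm C g) (c_Tm C f)) \<and>
    (\<forall>A\<in>c_ob C. c_eta C A \<in> c_hom C A (c_T C A) \<and> c_mu C A \<in> c_hom C (c_T C (c_T C A)) (c_T C A)) \<and>
    (\<forall>A B f. f \<in> c_hom C A B \<longrightarrow>
        c_comp C (c_Tm C f) (c_eta C A) = c_comp C (c_eta C B) f \<and>
        c_comp C (c_Tm C f) (c_mu C A) = c_comp C (c_mu C B) (c_Tm C (c_Tm C f))) \<and>
    (\<forall>A\<in>c_ob C. c_comp C (c_mu C A) (c_eta C (c_T C A)) = c_id C (c_T C A) \<and>
        c_comp C (c_mu C A) (c_Tm C (c_eta C A)) = c_id C (c_T C A) \<and>
        c_comp C (c_mu C A) (c_Tm C (c_mu C A)) = c_comp C (c_mu C A) (c_mu C (c_T C A)))"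

definition strong :: "('o,'m) cmonad \<Rightarrow> bool" where
  "strong C \<longleftrightarrow>
    (\<forall>A\<in>c_ob C. \<forall>B\<in>c_ob C.
        c_st C A B \<in> c_hom C (c_prod C A (c_T C B)) (c_T C (c_prod C A B))) \<and>
    (\<forall>A A' B B' f g. f \<in> c_hom C A A' \<longrightarrow> g \<in> c_hom C B B' \<longrightarrow>
        c_comp C (c_st C A' B') (cross C A (c_T C B) f (c_Tm C g))
        = c_comp C (c_Tm C (cross C A B f g)) (c_st C A B)) \<and>
    (\<forall>B\<in>c_ob C. c_comp C (c_Tm C (c_p2 C (c_one C) B)) (c_st C (c_one C) B)
        = c_p2 C (c_one C) (c_T C B)) \<and>
    (\<forall>A\<in>c_ob C. \<forall>B\<in>c_ob C. \<forall>D\<in>c_ob C.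
        c_comp C (c_Tm C (assoc C A B D)) (c_st C (c_prod C A B) D)
        = c_comp C (c_st C A (c_prod C B D))
            (c_comp C (cross C A (c_prod C B (c_T C D)) (c_id C A) (c_st C B D))
                      (assoc C A B (c_T C D)))) \<and>
    (\<forall>A\<in>c_ob C. \<forall>B\<in>c_ob C.
        c_comp C (c_st C A B) (cross C A B (c_id C A) (c_eta C B)) = c_eta C (c_prod C A B)) \<and>
    (\<forall>A\<in>c_ob C. \<forall>B\<in>c_ob C.
        c_comp C (c_st C A B) (cross C A (c_T C (c_T C B)) (c_id C A) (c_mu C B))
        = c_comp C (c_mu C (c_prod C A B)) (c_comp C (c_Tm C (c_st C A B)) (c_st C A (c_T C B))))"

definition cost :: "('o,'m) cmonad \<Rightarrow> 'o \<Rightarrow> 'o \<Rightarrow> 'm" where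
  "cost C A B = c_comp C (c_Tm C (swap C B A)) (c_comp C (c_st C B A) (swap C (c_T C A) B))"

definition nabla :: "('o,'m) cmonad \<Rightarrow> 'o \<Rightarrow> 'o \<Rightarrow> 'm" where
  "nabla C A B = c_comp C (c_mu C (c_prod C A B))
                   (c_comp C (c_Tm C (cost C A B)) (c_st C (c_T C A) B))"

definition commutative_monad :: "('o,'m) cmonad \<Rightarrow> bool" where
  "commutative_monad C \<longleftrightarrow> category C \<and> has_finite_products C \<and> monad C \<and> strong C \<and>
    (\<forall>A\<in>c_ob C. \<forall>B\<in>c_ob C.
       nabla C A B
       = c_comp C (c_mu C (c_prod C A B))
           (c_comp C (c_Tm C (c_st C A B)) (cost C A (c_T C B))))"

definition kcomp :: "('o,'m) cmonad \<Rightarrow> 'o \<Rightarrow> 'm \<Rightarrow> 'm \<Rightarrow> 'm" where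
  "kcomp C D g f = c_comp C (c_mu C D) (c_comp C (c_Tm C g) f)"

definition ktensor :: "('o,'m) cmonad \<Rightarrow> 'o \<Rightarrow> 'o \<Rightarrow> 'o \<Rightarrow> 'o \<Rightarrow> 'm \<Rightarrow> 'm \<Rightarrow> 'm" where
  "ktensor C A B A' B' f g = c_comp C (nabla C A' B') (cross C A B f g)"

definition kcopy :: "('o,'m) cmonad \<Rightarrow> 'o \<Rightarrow> 'm" where
  "kcopy C X = c_comp C (c_eta C (c_prod C X X)) (c_pair C (c_id C X) (c_id C X))"

definition kdel :: "('o,'m) cmonad \<Rightarrow> 'o \<Rightarrow> 'm" where
  "kdel C X = c_comp C (c_eta C (c_one C)) (c_bang C X)"

definition copyable :: "('o,'m) cmonad \<Rightarrow> 'o \<Rightarrow> 'o \<Rightarrow> 'm \<Rightarrow> bool" where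
  "copyable C X Y f \<longleftrightarrow>
     kcomp C (c_prod C Y Y) (kcopy C Y) f
     = kcomp C (c_prod C Y Y) (ktensor C X X Y Y f f) (kcopy C X)"

definition discardable :: "('o,'m) cmonad \<Rightarrow> 'o \<Rightarrow> 'o \<Rightarrow> 'm \<Rightarrow> bool" where
  "discardable C X Y f \<longleftrightarrow> kcomp C (c_one C) (kdel C Y) f = kdel C X"

definition deterministic :: "('o,'m) cmonad \<Rightarrow> 'o \<Rightarrow> 'o \<Rightarrow> 'm \<Rightarrow> bool" where
  "deterministic C X Y f \<longleftrightarrow> copyable C X Y f \<and> discardable C X Y f"

definition kthunk :: "('o,'m) cmonad \<Rightarrow> 'o \<Rightarrow> 'm" where
  "kthunk C A = c_comp C (c_eta C (c_T C A)) (c_eta C A)"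

definition ktildeT :: "('o,'m) cmonad \<Rightarrow> 'o \<Rightarrow> 'm \<Rightarrow> 'm" where
  "ktildeT C B f = c_comp C (c_eta C (c_T C B)) (c_comp C (c_mu C B) (c_Tm C f))"

definition thunkable :: "('o,'m) cmonad \<Rightarrow> 'o \<Rightarrow> 'o \<Rightarrow> 'm \<Rightarrow> bool" where
  "thunkable C A B f \<longleftrightarrow>
     kcomp C (c_T C B) (kthunk C B) f = kcomp C (c_T C B) (ktildeT C B f) (kthunk C A)"

fun opow :: "('o,'m) cmonad \<Rightarrow> 'o \<Rightarrow> nat \<Rightarrow> 'o" where
  "opow C X 0 = c_one C"
| "opow C X (Suc n) = c_prod C (opow C X n) X"

fun diagn :: "('o,'m) cmonad \<Rightarrow> 'o \<Rightarrow> nat \<Rightarrow> 'm" where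
  "diagn C X 0 = c_bang C X"
| "diagn C X (Suc n) = c_pair C (diagn C X n) (c_id C X)"

text \<open>force^{(x) n} : (TX)^n ~> X^n, with force# = identity of TX\<close>
fun kforcepow :: "('o,'m) cmonad \<Rightarrow> 'o \<Rightarrow> nat \<Rightarrow> 'm" where
  "kforcepow C X 0 = c_eta C (c_one C)"
| "kforcepow C X (Suc n) =
     ktensor C (opow C (c_T C X) n) (c_T C X) (opow C X n) X (kforcepow C X n) (c_id C (c_T C X))"

definition kcopyn :: "('o,'m) cmonad \<Rightarrow> 'o \<Rightarrow> nat \<Rightarrow> 'm" where
  "kcopyn C X n = c_comp C (c_eta C (opow C (c_T C X) n)) (diagn C (c_T C X) n)"

definition samp :: "('o,'m) cmonad \<Rightarrow> 'o \<Rightarrow> nat \<Rightarrow> 'm" where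
  "samp C X n = kcomp C (opow C X n) (kforcepow C X n) (kcopyn C X n)"

definition observational :: "('o,'m) cmonad \<Rightarrow> bool" where
  "observational C \<longleftrightarrow>
    (\<forall>X\<in>c_ob C. \<forall>A f g. f \<in> c_hom C A (c_T C (c_T C X)) \<longrightarrow> g \<in> c_hom C A (c_T C (c_T C X)) \<longrightarrow>
       (\<forall>n. kcomp C (opow C X n) (samp C X n) f = kcomp C (opow C X n) (samp C X n) g) \<longrightarrow> f = g)"

end

theory Submission
  imports Defs
begin

text \<open>
  Thunkability of \<open>f : A \<rightsquigarrow> B\<close> amounts to \<open>T \<eta> \<circ> f\<^sup>\<sharp> = \<eta>\<^sub>T\<^sub>B \<circ> f\<^sup>\<sharp>\<close> as maps
  \<open>A \<rightarrow> T (T B)\<close>, so by observationality it suffices that both become equal after Kleisli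
  post-composition with every sampling map \<open>samp\<^sub>n\<close>.  Sampling a pure computation \<open>\<eta> x\<close>
  returns \<open>n\<close> copies of \<open>x\<close>, so the first composite is \<open>T \<Delta>\<^sub>n \<circ> f\<^sup>\<sharp>\<close>.  The second one is
  \<open>samp\<^sub>n \<circ> f\<^sup>\<sharp> = force\<^sup>\<otimes>\<^sup>n \<circ> \<Delta>\<^sub>n \<circ> f\<^sup>\<sharp>\<close>, i.e. \<open>n\<close> independent runs of \<open>f\<close>.  If \<open>f\<close> is deterministic then, by induction on \<open>n\<close>,
  discardability (for \<open>n = 0\<close>) and copyability of \<open>f\<close> allow replacing them by a single run
  followed by copying, which again gives \<open>T \<Delta>\<^sub>n \<circ> f\<^sup>\<sharp>\<close>.
\<close>

locale comm_monad =
  fixes C :: "('o,'m) cmonad"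
  assumes commutative: "commutative_monad C"
begin

abbreviation cmp (infixr "\<cdot>" 55) where "g \<cdot> f \<equiv> c_comp C g f"
abbreviation "hom \<equiv> c_hom C"
abbreviation "ob \<equiv> c_ob C"
abbreviation "T \<equiv> c_T C"
abbreviation "Tm \<equiv> c_Tm C"
abbreviation "\<eta> \<equiv> c_eta C"
abbreviation "\<mu> \<equiv> c_mu C"
abbreviation "pr \<equiv> c_prod C"
abbreviation "pair \<equiv> c_pair C"
abbreviation "p1 \<equiv> c_p1 C"
abbreviation "p2 \<equiv> c_p2 C"
abbreviation "idm \<equiv> c_id C"
abbreviation "st \<equiv> c_st C"
abbreviation "one \<equiv> c_one C"
abbreviation "bang \<equiv> c_bang C"

lemma category: "category C" and finite_products: "has_finite_products C"
  and monad: "monad C" and strong: "strong C"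
  using commutative unfolding commutative_monad_def by auto

lemma dom_ob: "f \<in> hom A B \<Longrightarrow> A \<in> ob" and cod_ob: "f \<in> hom A B \<Longrightarrow> B \<in> ob"
  using category unfolding category_def by blast+

lemma id_in[intro]: "A \<in> ob \<Longrightarrow> idm A \<in> hom A A"
  using category unfolding category_def by simp

lemma comp_in[intro]: "f \<in> hom A B \<Longrightarrow> g \<in> hom B D \<Longrightarrow> g \<cdot> f \<in> hom A D"
  using category unfolding category_def by simp

lemma assoc: "f \<in> hom A B \<Longrightarrow> g \<in> hom B D \<Longrightarrow> h \<in> hom D E \<Longrightarrow> (h \<cdot> g) \<cdot> f = h \<cdot> g \<cdot> f"
  using category unfolding category_def by simp

lemma id_l: "f \<in> hom A B \<Longrightarrow> idm B \<cdot> f = f" and id_r: "f \<in> hom A B \<Longrightarrow> f \<cdot> idm A = f"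
  using category unfolding category_def by simp_all

lemma one_ob[intro]: "one \<in> ob"
  and bang_in[intro]: "A \<in> ob \<Longrightarrow> bang A \<in> hom A one"
  and bang_unique: "f \<in> hom A one \<Longrightarrow> f = bang A"
  using finite_products unfolding has_finite_products_def by simp_all

lemma prod_ob[intro]: "A \<in> ob \<Longrightarrow> B \<in> ob \<Longrightarrow> pr A B \<in> ob"
  and p1_in[intro]: "A \<in> ob \<Longrightarrow> B \<in> ob \<Longrightarrow> p1 A B \<in> hom (pr A B) A"
  and p2_in[intro]: "A \<in> ob \<Longrightarrow> B \<in> ob \<Longrightarrow> p2 A B \<in> hom (pr A B) B"
  and pair_in[intro]: "f \<in> hom X A \<Longrightarrow> g \<in> hom X B \<Longrightarrow> pair f g \<in> hom X (pr A B)"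
  and p1_pair: "f \<in> hom X A \<Longrightarrow> g \<in> hom X B \<Longrightarrow> p1 A B \<cdot> pair f g = f"
  and p2_pair: "f \<in> hom X A \<Longrightarrow> g \<in> hom X B \<Longrightarrow> p2 A B \<cdot> pair f g = g"
  and pair_surj: "h \<in> hom X (pr A B) \<Longrightarrow> pair (p1 A B \<cdot> h) (p2 A B \<cdot> h) = h"
  using finite_products unfolding has_finite_products_def by simp_all

lemma T_ob[intro]: "A \<in> ob \<Longrightarrow> T A \<in> ob"
  and Tm_in[intro]: "f \<in> hom A B \<Longrightarrow> Tm f \<in> hom (T A) (T B)"
  and Tm_id: "A \<in> ob \<Longrightarrow> Tm (idm A) = idm (T A)"
  and Tm_comp: "f \<in> hom A B \<Longrightarrow> g \<in> hom B D \<Longrightarrow> Tm (g \<cdot> f) = Tm g \<cdot> Tm f"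
  using monad unfolding monad_def by simp_all

lemma eta_in[intro]: "A \<in> ob \<Longrightarrow> \<eta> A \<in> hom A (T A)"
  and mu_in[intro]: "A \<in> ob \<Longrightarrow> \<mu> A \<in> hom (T (T A)) (T A)"
  and eta_natural: "f \<in> hom A B \<Longrightarrow> Tm f \<cdot> \<eta> A = \<eta> B \<cdot> f"
  and mu_natural: "f \<in> hom A B \<Longrightarrow> Tm f \<cdot> \<mu> A = \<mu> B \<cdot> Tm (Tm f)"
  and mu_eta: "A \<in> ob \<Longrightarrow> \<mu> A \<cdot> \<eta> (T A) = idm (T A)"
  and mu_Tm_eta: "A \<in> ob \<Longrightarrow> \<mu> A \<cdot> Tm (\<eta> A) = idm (T A)"
  using monad unfolding monad_def by simp_all

lemma st_in[intro]: "A \<in> ob \<Longrightarrow> B \<in> ob \<Longrightarrow> st A B \<in> hom (pr A (T B)) (T (pr A B))"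
  and st_natural: "f \<in> hom A A' \<Longrightarrow> g \<in> hom B B' \<Longrightarrow>
    st A' B' \<cdot> cross C A (T B) f (Tm g) = Tm (cross C A B f g) \<cdot> st A B"
  and st_eta: "A \<in> ob \<Longrightarrow> B \<in> ob \<Longrightarrow> st A B \<cdot> cross C A B (idm A) (\<eta> B) = \<eta> (pr A B)"
  using strong unfolding strong_def by simp_all

lemma pair_comp:
  assumes f: "f \<in> hom X A" and g: "g \<in> hom X B" and h: "h \<in> hom Y X"
  shows "pair f g \<cdot> h = pair (f \<cdot> h) (g \<cdot> h)"
proof -
  have A: "A \<in> ob" and B: "B \<in> ob" using f g cod_ob by blast+
  have fg: "pair f g \<in> hom X (pr A B)" using f g by blast
  have "pair f g \<cdot> h = pair (p1 A B \<cdot> pair f g \<cdot> h) (p2 A B \<cdot> pair f g \<cdot> h)"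
    using pair_surj[OF comp_in[OF h fg]] by simp
  also have "p1 A B \<cdot> pair f g \<cdot> h = f \<cdot> h"
    using assoc[OF h fg p1_in[OF A B]] p1_pair[OF f g] by simp
  also have "p2 A B \<cdot> pair f g \<cdot> h = g \<cdot> h"
    using assoc[OF h fg p2_in[OF A B]] p2_pair[OF f g] by simp
  finally show ?thesis .
qed

lemma cross_in[intro]:
  assumes f: "f \<in> hom A A'" and g: "g \<in> hom B B'"
  shows "cross C A B f g \<in> hom (pr A B) (pr A' B')"
proof -
  have A: "A \<in> ob" and B: "B \<in> ob" using f g dom_ob by blast+
  show ?thesis unfolding cross_def
    by (intro pair_in comp_in[OF p1_in[OF A B] f] comp_in[OF p2_in[OF A B] g])
qed

lemma cross_pair:
  assumes f: "f \<in> hom A A'" and g: "g \<in> hom B B'" and h: "h \<in> hom X A" and k: "k \<in> hom X B"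
  shows "cross C A B f g \<cdot> pair h k = pair (f \<cdot> h) (g \<cdot> k)"
proof -
  have A: "A \<in> ob" and B: "B \<in> ob" using f g dom_ob by blast+
  have hk: "pair h k \<in> hom X (pr A B)" using h k by blast
  have "cross C A B f g \<cdot> pair h k = pair ((f \<cdot> p1 A B) \<cdot> pair h k) ((g \<cdot> p2 A B) \<cdot> pair h k)"
    unfolding cross_def
    by (rule pair_comp[OF comp_in[OF p1_in[OF A B] f] comp_in[OF p2_in[OF A B] g] hk])
  also have "(f \<cdot> p1 A B) \<cdot> pair h k = f \<cdot> h"
    using assoc[OF hk p1_in[OF A B] f] p1_pair[OF h k] by simp
  also have "(g \<cdot> p2 A B) \<cdot> pair h k = g \<cdot> k"
    using assoc[OF hk p2_in[OF A B] g] p2_pair[OF h k] by simp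
  finally show ?thesis .
qed

lemma cross_comp:
  assumes f: "f \<in> hom A A'" and g: "g \<in> hom B B'"
    and f': "f' \<in> hom A' A''" and g': "g' \<in> hom B' B''"
  shows "cross C A' B' f' g' \<cdot> cross C A B f g = cross C A B (f' \<cdot> f) (g' \<cdot> g)"
proof -
  have A: "A \<in> ob" and B: "B \<in> ob" using f g dom_ob by blast+
  have "cross C A' B' f' g' \<cdot> cross C A B f g = pair (f' \<cdot> f \<cdot> p1 A B) (g' \<cdot> g \<cdot> p2 A B)"
    unfolding cross_def[of C A B]
    by (rule cross_pair[OF f' g' comp_in[OF p1_in[OF A B] f] comp_in[OF p2_in[OF A B] g]])
  also have "\<dots> = cross C A B (f' \<cdot> f) (g' \<cdot> g)"
    unfolding cross_def using assoc[OF p1_in[OF A B] f f'] assoc[OF p2_in[OF A B] g g'] by simp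
  finally show ?thesis .
qed

lemma cross_id:
  assumes A: "A \<in> ob" and B: "B \<in> ob"
  shows "cross C A B (idm A) (idm B) = idm (pr A B)"
  using pair_surj[OF id_in[OF prod_ob[OF A B]]]
  unfolding cross_def using id_l[OF p1_in[OF A B]] id_r[OF p1_in[OF A B]]
    id_l[OF p2_in[OF A B]] id_r[OF p2_in[OF A B]] by simp

lemma swap_in[intro]: "A \<in> ob \<Longrightarrow> B \<in> ob \<Longrightarrow> swap C A B \<in> hom (pr A B) (pr B A)"
  unfolding swap_def by blast

lemma swap_cross:
  assumes f: "f \<in> hom A A'" and g: "g \<in> hom B B'"
  shows "swap C A' B' \<cdot> cross C A B f g = cross C B A g f \<cdot> swap C A B"
proof -
  have A: "A \<in> ob" and B: "B \<in> ob" using f g dom_ob by blast+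
  have A': "A' \<in> ob" and B': "B' \<in> ob" using f g cod_ob by blast+
  have fp: "f \<cdot> p1 A B \<in> hom (pr A B) A'" and gp: "g \<cdot> p2 A B \<in> hom (pr A B) B'"
    using f g A B by blast+
  have "swap C A' B' \<cdot> cross C A B f g
      = pair (p2 A' B' \<cdot> cross C A B f g) (p1 A' B' \<cdot> cross C A B f g)"
    unfolding swap_def by (rule pair_comp[OF p2_in[OF A' B'] p1_in[OF A' B'] cross_in[OF f g]])
  also have "\<dots> = pair (g \<cdot> p2 A B) (f \<cdot> p1 A B)"
    unfolding cross_def using p1_pair[OF fp gp] p2_pair[OF fp gp] by simp
  also have "\<dots> = cross C B A g f \<cdot> swap C A B"
    unfolding swap_def using cross_pair[OF g f p2_in[OF A B] p1_in[OF A B]] by simp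
  finally show ?thesis .
qed

lemma swap_swap:
  assumes A: "A \<in> ob" and B: "B \<in> ob"
  shows "swap C B A \<cdot> swap C A B = idm (pr A B)"
proof -
  have "swap C B A \<cdot> swap C A B = pair (p2 B A \<cdot> swap C A B) (p1 B A \<cdot> swap C A B)"
    unfolding swap_def[of C B A] by (rule pair_comp[OF p2_in[OF B A] p1_in[OF B A] swap_in[OF A B]])
  also have "\<dots> = cross C A B (idm A) (idm B)"
    unfolding swap_def cross_def
    using p1_pair[OF p2_in[OF A B] p1_in[OF A B]] p2_pair[OF p2_in[OF A B] p1_in[OF A B]]
      id_l[OF p1_in[OF A B]] id_l[OF p2_in[OF A B]] by simp
  finally show ?thesis using cross_id[OF A B] by simp
qed

lemma kcomp_eta_right:
  assumes D: "D \<in> ob" and g: "g \<in> hom B (T D)"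
  shows "kcomp C D g (\<eta> B) = g"
proof -
  have B: "B \<in> ob" using g dom_ob by blast
  have "kcomp C D g (\<eta> B) = (\<mu> D \<cdot> \<eta> (T D)) \<cdot> g"
    unfolding kcomp_def using eta_natural[OF g] assoc[OF g eta_in[OF T_ob[OF D]] mu_in[OF D]]
    by simp
  also have "\<dots> = g" using mu_eta[OF D] id_l[OF g] by simp
  finally show ?thesis .
qed

lemma kcomp_pure:
  assumes D: "D \<in> ob" and g: "g \<in> hom B (T D)" and h: "h \<in> hom X B"
  shows "kcomp C D g (\<eta> B \<cdot> h) = g \<cdot> h"
proof -
  have B: "B \<in> ob" using h cod_ob by blast
  have "kcomp C D g (\<eta> B \<cdot> h) = kcomp C D g (\<eta> B) \<cdot> h"
    unfolding kcomp_def
    using assoc[OF h eta_in[OF B] Tm_in[OF g]] assoc[OF h comp_in[OF eta_in[OF B] Tm_in[OF g]] mu_in[OF D]]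
    by simp
  then show ?thesis using kcomp_eta_right[OF D g] by simp
qed

lemma kcomp_Tm:
  assumes D: "D \<in> ob" and g: "g \<in> hom Y (T D)" and h: "h \<in> hom X Y" and f: "f \<in> hom A (T X)"
  shows "kcomp C D g (Tm h \<cdot> f) = kcomp C D (g \<cdot> h) f"
  unfolding kcomp_def using assoc[OF f Tm_in[OF h] Tm_in[OF g]] Tm_comp[OF h g] by simp

lemma pure_kcomp:
  assumes D: "D \<in> ob" and g: "g \<in> hom X D" and f: "f \<in> hom A (T X)"
  shows "kcomp C D (\<eta> D \<cdot> g) f = Tm g \<cdot> f"
proof -
  have "kcomp C D (\<eta> D \<cdot> g) f = ((\<mu> D \<cdot> Tm (\<eta> D)) \<cdot> Tm g) \<cdot> f"
    unfolding kcomp_def using Tm_comp[OF g eta_in[OF D]]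
      assoc[OF Tm_in[OF g] Tm_in[OF eta_in[OF D]] mu_in[OF D]]
      assoc[OF f comp_in[OF Tm_in[OF g] Tm_in[OF eta_in[OF D]]] mu_in[OF D]] by simp
  then show ?thesis using mu_Tm_eta[OF D] id_l[OF Tm_in[OF g]] by simp
qed

lemma cost_in[intro]: "A \<in> ob \<Longrightarrow> B \<in> ob \<Longrightarrow> cost C A B \<in> hom (pr (T A) B) (T (pr A B))"
  unfolding cost_def by (meson Tm_in T_ob comp_in st_in swap_in)

lemma nabla_in[intro]:
  "A \<in> ob \<Longrightarrow> B \<in> ob \<Longrightarrow> nabla C A B \<in> hom (pr (T A) (T B)) (T (pr A B))"
  unfolding nabla_def by (meson Tm_in T_ob comp_in st_in cost_in mu_in prod_ob)

lemma cost_eta: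
  assumes A: "A \<in> ob" and B: "B \<in> ob"
  shows "cost C A B \<cdot> cross C A B (\<eta> A) (idm B) = \<eta> (pr A B)"
proof -
  have TA: "T A \<in> ob" using A by blast
  have s: "swap C (T A) B \<in> hom (pr (T A) B) (pr B (T A))" using TA B by blast
  have e: "cross C A B (\<eta> A) (idm B) \<in> hom (pr A B) (pr (T A) B)" using A B by blast
  have s': "swap C B A \<in> hom (pr B A) (pr A B)" using A B by blast
  have st: "st B A \<in> hom (pr B (T A)) (T (pr B A))" using A B by blast
  have "cost C A B \<cdot> cross C A B (\<eta> A) (idm B)
      = Tm (swap C B A) \<cdot> st B A \<cdot> swap C (T A) B \<cdot> cross C A B (\<eta> A) (idm B)"
    unfolding cost_def using assoc[OF e s st] assoc[OF e comp_in[OF s st] Tm_in[OF s']] by simp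
  also have "swap C (T A) B \<cdot> cross C A B (\<eta> A) (idm B) = cross C B A (idm B) (\<eta> A) \<cdot> swap C A B"
    by (rule swap_cross[OF eta_in[OF A] id_in[OF B]])
  also have "st B A \<cdot> cross C B A (idm B) (\<eta> A) \<cdot> swap C A B
      = (st B A \<cdot> cross C B A (idm B) (\<eta> A)) \<cdot> swap C A B"
    using assoc[OF swap_in[OF A B] cross_in[OF id_in[OF B] eta_in[OF A]] st] by simp
  also have "\<dots> = \<eta> (pr B A) \<cdot> swap C A B" using st_eta[OF B A] by simp
  also have "Tm (swap C B A) \<cdot> \<eta> (pr B A) \<cdot> swap C A B
      = (Tm (swap C B A) \<cdot> \<eta> (pr B A)) \<cdot> swap C A B"
    using assoc[OF swap_in[OF A B] eta_in[OF prod_ob[OF B A]] Tm_in[OF s']] by simp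
  also have "\<dots> = (\<eta> (pr A B) \<cdot> swap C B A) \<cdot> swap C A B" using eta_natural[OF s'] by simp
  also have "\<dots> = \<eta> (pr A B)"
    using assoc[OF swap_in[OF A B] s' eta_in[OF prod_ob[OF A B]]] swap_swap[OF A B]
      id_r[OF eta_in[OF prod_ob[OF A B]]] by simp
  finally show ?thesis .
qed

lemma nabla_eta:
  assumes A: "A \<in> ob" and B: "B \<in> ob"
  shows "nabla C A B \<cdot> cross C A B (\<eta> A) (\<eta> B) = \<eta> (pr A B)"
proof -
  have TA: "T A \<in> ob" and AB: "pr A B \<in> ob" using A B by blast+
  have eB: "cross C (T A) B (idm (T A)) (\<eta> B) \<in> hom (pr (T A) B) (pr (T A) (T B))"
    using TA B by blast
  have eA: "cross C A B (\<eta> A) (idm B) \<in> hom (pr A B) (pr (T A) B)" using A B by blast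
  have st: "st (T A) B \<in> hom (pr (T A) (T B)) (T (pr (T A) B))" using TA B by blast
  have co: "cost C A B \<in> hom (pr (T A) B) (T (pr A B))" using A B by blast
  have "nabla C A B \<cdot> cross C (T A) B (idm (T A)) (\<eta> B)
      = \<mu> (pr A B) \<cdot> Tm (cost C A B) \<cdot> st (T A) B \<cdot> cross C (T A) B (idm (T A)) (\<eta> B)"
    unfolding nabla_def
    using assoc[OF eB st Tm_in[OF co]] assoc[OF eB comp_in[OF st Tm_in[OF co]] mu_in[OF AB]] by simp
  also have "\<dots> = kcomp C (pr A B) (cost C A B) (\<eta> (pr (T A) B))"
    unfolding kcomp_def using st_eta[OF TA B] by simp
  also have "\<dots> = cost C A B" by (rule kcomp_eta_right[OF AB co])
  finally have nabla_eta_right: "nabla C A B \<cdot> cross C (T A) B (idm (T A)) (\<eta> B) = cost C A B" .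
  have "cross C A B (\<eta> A) (\<eta> B) = cross C (T A) B (idm (T A)) (\<eta> B) \<cdot> cross C A B (\<eta> A) (idm B)"
    using cross_comp[OF eta_in[OF A] id_in[OF B] id_in[OF TA] eta_in[OF B]]
      id_l[OF eta_in[OF A]] id_r[OF eta_in[OF B]] by simp
  then have "nabla C A B \<cdot> cross C A B (\<eta> A) (\<eta> B)
      = (nabla C A B \<cdot> cross C (T A) B (idm (T A)) (\<eta> B)) \<cdot> cross C A B (\<eta> A) (idm B)"
    using assoc[OF eA eB nabla_in[OF A B]] by simp
  then show ?thesis using nabla_eta_right cost_eta[OF A B] by simp
qed

lemma cost_natural:
  assumes g: "g \<in> hom A A'" and B: "B \<in> ob"
  shows "cost C A' B \<cdot> cross C (T A) B (Tm g) (idm B) = Tm (cross C A B g (idm B)) \<cdot> cost C A B"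
proof -
  have A: "A \<in> ob" and A': "A' \<in> ob" using g dom_ob cod_ob by blast+
  have TA: "T A \<in> ob" and TA': "T A' \<in> ob" using A A' by blast+
  have Tg: "Tm g \<in> hom (T A) (T A')" using g by blast
  have s': "swap C (T A') B \<in> hom (pr (T A') B) (pr B (T A'))" using TA' B by blast
  have s: "swap C (T A) B \<in> hom (pr (T A) B) (pr B (T A))" using TA B by blast
  have x: "cross C (T A) B (Tm g) (idm B) \<in> hom (pr (T A) B) (pr (T A') B)" using Tg B by blast
  have y: "cross C B (T A) (idm B) (Tm g) \<in> hom (pr B (T A)) (pr B (T A'))" using Tg B by blast
  have st': "st B A' \<in> hom (pr B (T A')) (T (pr B A'))" using A' B by blast
  have stA: "st B A \<in> hom (pr B (T A)) (T (pr B A))" using A B by blast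
  have z: "cross C B A (idm B) g \<in> hom (pr B A) (pr B A')" using g B by blast
  have w: "cross C A B g (idm B) \<in> hom (pr A B) (pr A' B)" using g B by blast
  have u': "swap C B A' \<in> hom (pr B A') (pr A' B)" using A' B by blast
  have u: "swap C B A \<in> hom (pr B A) (pr A B)" using A B by blast
  have "cost C A' B \<cdot> cross C (T A) B (Tm g) (idm B)
      = Tm (swap C B A') \<cdot> st B A' \<cdot> swap C (T A') B \<cdot> cross C (T A) B (Tm g) (idm B)"
    unfolding cost_def using assoc[OF x s' st'] assoc[OF x comp_in[OF s' st'] Tm_in[OF u']] by simp
  also have "swap C (T A') B \<cdot> cross C (T A) B (Tm g) (idm B) = cross C B (T A) (idm B) (Tm g) \<cdot> swap C (T A) B"
    by (rule swap_cross[OF Tg id_in[OF B]])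
  also have "st B A' \<cdot> cross C B (T A) (idm B) (Tm g) \<cdot> swap C (T A) B
      = (st B A' \<cdot> cross C B (T A) (idm B) (Tm g)) \<cdot> swap C (T A) B"
    using assoc[OF s y st'] by simp
  also have "st B A' \<cdot> cross C B (T A) (idm B) (Tm g) = Tm (cross C B A (idm B) g) \<cdot> st B A"
    by (rule st_natural[OF id_in[OF B] g])
  also have "(Tm (cross C B A (idm B) g) \<cdot> st B A) \<cdot> swap C (T A) B
      = Tm (cross C B A (idm B) g) \<cdot> st B A \<cdot> swap C (T A) B"
    using assoc[OF s stA Tm_in[OF z]] by simp
  also have "Tm (swap C B A') \<cdot> Tm (cross C B A (idm B) g) \<cdot> st B A \<cdot> swap C (T A) B
      = (Tm (swap C B A') \<cdot> Tm (cross C B A (idm B) g)) \<cdot> st B A \<cdot> swap C (T A) B"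
    using assoc[OF comp_in[OF s stA] Tm_in[OF z] Tm_in[OF u']] by simp
  also have "Tm (swap C B A') \<cdot> Tm (cross C B A (idm B) g) = Tm (cross C A B g (idm B)) \<cdot> Tm (swap C B A)"
    using Tm_comp[OF z u'] Tm_comp[OF u w] swap_cross[OF id_in[OF B] g] by simp
  also have "(Tm (cross C A B g (idm B)) \<cdot> Tm (swap C B A)) \<cdot> st B A \<cdot> swap C (T A) B
      = Tm (cross C A B g (idm B)) \<cdot> cost C A B"
    unfolding cost_def using assoc[OF comp_in[OF s stA] Tm_in[OF u] Tm_in[OF w]] by simp
  finally show ?thesis .
qed

lemma nabla_natural_left:
  assumes g: "g \<in> hom A A'" and B: "B \<in> ob"
  shows "nabla C A' B \<cdot> cross C (T A) (T B) (Tm g) (idm (T B)) = Tm (cross C A B g (idm B)) \<cdot> nabla C A B"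
proof -
  have A: "A \<in> ob" and A': "A' \<in> ob" using g dom_ob cod_ob by blast+
  have TA: "T A \<in> ob" and TA': "T A' \<in> ob" and TB: "T B \<in> ob" using A A' B by blast+
  have Tg: "Tm g \<in> hom (T A) (T A')" using g by blast
  have X: "cross C (T A) (T B) (Tm g) (idm (T B)) \<in> hom (pr (T A) (T B)) (pr (T A') (T B))" using Tg TB by blast
  have x: "cross C (T A) B (Tm g) (idm B) \<in> hom (pr (T A) B) (pr (T A') B)" using Tg B by blast
  have w: "cross C A B g (idm B) \<in> hom (pr A B) (pr A' B)" using g B by blast
  have st': "st (T A') B \<in> hom (pr (T A') (T B)) (T (pr (T A') B))" using TA' B by blast
  have st: "st (T A) B \<in> hom (pr (T A) (T B)) (T (pr (T A) B))" using TA B by blast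
  have co': "cost C A' B \<in> hom (pr (T A') B) (T (pr A' B))" using A' B by blast
  have co: "cost C A B \<in> hom (pr (T A) B) (T (pr A B))" using A B by blast
  have AB: "pr A B \<in> ob" and A'B: "pr A' B \<in> ob" using A A' B by blast+
  have "nabla C A' B \<cdot> cross C (T A) (T B) (Tm g) (idm (T B))
     = \<mu> (pr A' B) \<cdot> Tm (cost C A' B) \<cdot> st (T A') B \<cdot> cross C (T A) (T B) (Tm g) (idm (T B))"
    unfolding nabla_def using assoc[OF X st' Tm_in[OF co']] assoc[OF X comp_in[OF st' Tm_in[OF co']] mu_in[OF A'B]] by simp
  also have "st (T A') B \<cdot> cross C (T A) (T B) (Tm g) (idm (T B)) = Tm (cross C (T A) B (Tm g) (idm B)) \<cdot> st (T A) B"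
    using st_natural[OF Tg id_in[OF B]] Tm_id[OF B] by simp
  also have "Tm (cost C A' B) \<cdot> Tm (cross C (T A) B (Tm g) (idm B)) \<cdot> st (T A) B
     = Tm (Tm (cross C A B g (idm B))) \<cdot> Tm (cost C A B) \<cdot> st (T A) B"
  proof -
    have "Tm (cost C A' B) \<cdot> Tm (cross C (T A) B (Tm g) (idm B)) \<cdot> st (T A) B
       = (Tm (cost C A' B) \<cdot> Tm (cross C (T A) B (Tm g) (idm B))) \<cdot> st (T A) B"
      using assoc[OF st Tm_in[OF x] Tm_in[OF co']] by simp
    also have "Tm (cost C A' B) \<cdot> Tm (cross C (T A) B (Tm g) (idm B)) = Tm (Tm (cross C A B g (idm B))) \<cdot> Tm (cost C A B)"
      using Tm_comp[OF x co'] Tm_comp[OF co Tm_in[OF w]] cost_natural[OF g B] by simp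
    also have "(Tm (Tm (cross C A B g (idm B))) \<cdot> Tm (cost C A B)) \<cdot> st (T A) B
       = Tm (Tm (cross C A B g (idm B))) \<cdot> Tm (cost C A B) \<cdot> st (T A) B"
      using assoc[OF st Tm_in[OF co] Tm_in[OF Tm_in[OF w]]] by simp
    finally show ?thesis .
  qed
  also have "\<mu> (pr A' B) \<cdot> Tm (Tm (cross C A B g (idm B))) \<cdot> Tm (cost C A B) \<cdot> st (T A) B
     = (\<mu> (pr A' B) \<cdot> Tm (Tm (cross C A B g (idm B)))) \<cdot> Tm (cost C A B) \<cdot> st (T A) B"
    using assoc[OF comp_in[OF st Tm_in[OF co]] Tm_in[OF Tm_in[OF w]] mu_in[OF A'B]] by simp
  also have "\<dots> = (Tm (cross C A B g (idm B)) \<cdot> \<mu> (pr A B)) \<cdot> Tm (cost C A B) \<cdot> st (T A) B"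
    using mu_natural[OF w] by simp
  also have "\<dots> = Tm (cross C A B g (idm B)) \<cdot> nabla C A B"
    unfolding nabla_def using assoc[OF comp_in[OF st Tm_in[OF co]] mu_in[OF AB] Tm_in[OF w]] by simp
  finally show ?thesis .
qed

lemma copyable_iff:
  assumes Y: "Y \<in> ob" and f: "f \<in> hom X (T Y)"
  shows "copyable C X Y f \<longleftrightarrow> Tm (pair (idm Y) (idm Y)) \<cdot> f = nabla C Y Y \<cdot> pair f f"
proof -
  have X: "X \<in> ob" and YY: "pr Y Y \<in> ob" using f Y dom_ob by blast+
  have dY: "pair (idm Y) (idm Y) \<in> hom Y (pr Y Y)" and dX: "pair (idm X) (idm X) \<in> hom X (pr X X)"
    using X Y by blast+
  have ff: "cross C X X f f \<in> hom (pr X X) (pr (T Y) (T Y))" using f by blast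
  have "kcomp C (pr Y Y) (ktensor C X X Y Y f f) (kcopy C X)
      = nabla C Y Y \<cdot> cross C X X f f \<cdot> pair (idm X) (idm X)"
    unfolding kcopy_def ktensor_def
    using kcomp_pure[OF YY comp_in[OF ff nabla_in[OF Y Y]] dX] assoc[OF dX ff nabla_in[OF Y Y]]
    by simp
  also have "\<dots> = nabla C Y Y \<cdot> pair f f"
    using cross_pair[OF f f id_in[OF X] id_in[OF X]] id_r[OF f] by simp
  moreover have "kcomp C (pr Y Y) (kcopy C Y) f = Tm (pair (idm Y) (idm Y)) \<cdot> f"
    unfolding kcopy_def by (rule pure_kcomp[OF YY dY f])
  ultimately show ?thesis unfolding copyable_def by simp
qed

lemma discardable_iff:
  assumes Y: "Y \<in> ob" and f: "f \<in> hom X (T Y)"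
  shows "discardable C X Y f \<longleftrightarrow> Tm (bang Y) \<cdot> f = \<eta> one \<cdot> bang X"
proof -
  have "kcomp C one (kdel C Y) f = Tm (bang Y) \<cdot> f"
    unfolding kdel_def by (rule pure_kcomp[OF one_ob bang_in[OF Y] f])
  then show ?thesis unfolding discardable_def kdel_def by simp
qed

lemma thunkable_iff:
  assumes B: "B \<in> ob" and f: "f \<in> hom A (T B)"
  shows "thunkable C A B f \<longleftrightarrow> Tm (\<eta> B) \<cdot> f = \<eta> (T B) \<cdot> f"
proof -
  have A: "A \<in> ob" using f dom_ob by blast
  have TB: "T B \<in> ob" using B by blast
  have Tf: "ktildeT C B f \<in> hom (T A) (T (T B))"
    unfolding ktildeT_def using f B by (meson Tm_in comp_in mu_in eta_in T_ob)
  have "kcomp C (T B) (ktildeT C B f) (kthunk C A) = ktildeT C B f \<cdot> \<eta> A"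
    unfolding kthunk_def by (rule kcomp_pure[OF TB Tf eta_in[OF A]])
  also have "\<dots> = \<eta> (T B) \<cdot> kcomp C B f (\<eta> A)"
    unfolding ktildeT_def kcomp_def
    using assoc[OF eta_in[OF A] comp_in[OF Tm_in[OF f] mu_in[OF B]] eta_in[OF TB]]
      assoc[OF eta_in[OF A] Tm_in[OF f] mu_in[OF B]] by simp
  also have "\<dots> = \<eta> (T B) \<cdot> f" using kcomp_eta_right[OF B f] by simp
  moreover have "kcomp C (T B) (kthunk C B) f = Tm (\<eta> B) \<cdot> f"
    unfolding kthunk_def by (rule pure_kcomp[OF TB eta_in[OF B] f])
  ultimately show ?thesis unfolding thunkable_def by simp
qed

end

fun cross_pow :: "('o,'m) cmonad \<Rightarrow> 'o \<Rightarrow> 'm \<Rightarrow> nat \<Rightarrow> 'm" where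
  "cross_pow C X g 0 = c_id C (c_one C)"
| "cross_pow C X g (Suc n) = cross C (opow C X n) X (cross_pow C X g n) g"

context comm_monad
begin

lemma opow_ob[intro]: "X \<in> ob \<Longrightarrow> opow C X n \<in> ob"
  by (induction n) auto

lemma diagn_in[intro]: "X \<in> ob \<Longrightarrow> diagn C X n \<in> hom X (opow C X n)"
  by (induction n) auto

lemma cross_pow_in[intro]: "g \<in> hom X Y \<Longrightarrow> cross_pow C X g n \<in> hom (opow C X n) (opow C Y n)"
  by (induction n) auto

lemma kforcepow_in[intro]:
  "X \<in> ob \<Longrightarrow> kforcepow C X n \<in> hom (opow C (T X) n) (T (opow C X n))"
  by (induction n) (auto simp: ktensor_def)

lemma diagn_natural:
  assumes g: "g \<in> hom X Y"
  shows "diagn C Y n \<cdot> g = cross_pow C X g n \<cdot> diagn C X n"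
proof (induction n)
  case 0
  have X: "X \<in> ob" using g dom_ob by blast
  have "bang Y \<cdot> g = bang X" using g cod_ob by (intro bang_unique) blast
  then show ?case using id_l[OF bang_in[OF X]] by simp
next
  case (Suc n)
  have X: "X \<in> ob" and Y: "Y \<in> ob" using g dom_ob cod_ob by blast+
  have "diagn C Y (Suc n) \<cdot> g = pair (diagn C Y n \<cdot> g) (idm Y \<cdot> g)"
    using pair_comp[OF diagn_in[OF Y] id_in[OF Y] g] by simp
  also have "\<dots> = pair (cross_pow C X g n \<cdot> diagn C X n) (g \<cdot> idm X)"
    using Suc id_l[OF g] id_r[OF g] by simp
  also have "\<dots> = cross_pow C X g (Suc n) \<cdot> diagn C X (Suc n)"
    using cross_pair[OF cross_pow_in[OF g] g diagn_in[OF X] id_in[OF X]] by simp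
  finally show ?case .
qed

lemma kforcepow_cross_pow_eta:
  assumes B: "B \<in> ob"
  shows "kforcepow C B n \<cdot> cross_pow C B (\<eta> B) n = \<eta> (opow C B n)"
proof (induction n)
  case 0
  then show ?case using id_r[OF eta_in[OF one_ob]] by simp
next
  case (Suc n)
  have TB: "T B \<in> ob" and Bn: "opow C B n \<in> ob" using B by blast+
  have F: "kforcepow C B n \<in> hom (opow C (T B) n) (T (opow C B n))" using B by blast
  have E: "cross_pow C B (\<eta> B) n \<in> hom (opow C B n) (opow C (T B) n)" using B by blast
  have FT: "cross C (opow C (T B) n) (T B) (kforcepow C B n) (idm (T B))
      \<in> hom (pr (opow C (T B) n) (T B)) (pr (T (opow C B n)) (T B))" using F TB by blast
  have ET: "cross C (opow C B n) B (cross_pow C B (\<eta> B) n) (\<eta> B)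
      \<in> hom (pr (opow C B n) B) (pr (opow C (T B) n) (T B))" using E B by blast
  have "kforcepow C B (Suc n) \<cdot> cross_pow C B (\<eta> B) (Suc n)
      = nabla C (opow C B n) B \<cdot> cross C (opow C (T B) n) (T B) (kforcepow C B n) (idm (T B))
         \<cdot> cross C (opow C B n) B (cross_pow C B (\<eta> B) n) (\<eta> B)"
    unfolding kforcepow.simps cross_pow.simps ktensor_def
    using assoc[OF ET FT nabla_in[OF Bn B]] by simp
  also have "cross C (opow C (T B) n) (T B) (kforcepow C B n) (idm (T B))
         \<cdot> cross C (opow C B n) B (cross_pow C B (\<eta> B) n) (\<eta> B)
      = cross C (opow C B n) B (\<eta> (opow C B n)) (\<eta> B)"
    using cross_comp[OF E eta_in[OF B] F id_in[OF TB]] Suc id_l[OF eta_in[OF B]] by simp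
  also have "nabla C (opow C B n) B \<cdot> cross C (opow C B n) B (\<eta> (opow C B n)) (\<eta> B)
      = \<eta> (opow C B (Suc n))"
    using nabla_eta[OF Bn B] by simp
  finally show ?case .
qed

lemma samp_eq:
  assumes B: "B \<in> ob"
  shows "samp C B n = kforcepow C B n \<cdot> diagn C (T B) n"
  unfolding samp_def kcopyn_def
  by (rule kcomp_pure[OF opow_ob[OF B] kforcepow_in[OF B] diagn_in[OF T_ob[OF B]]])

lemma samp_in[intro]: "B \<in> ob \<Longrightarrow> samp C B n \<in> hom (T B) (T (opow C B n))"
  using samp_eq by (metis comp_in diagn_in kforcepow_in T_ob)

lemma samp_eta:
  assumes B: "B \<in> ob"
  shows "samp C B n \<cdot> \<eta> B = \<eta> (opow C B n) \<cdot> diagn C B n"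
proof -
  have F: "kforcepow C B n \<in> hom (opow C (T B) n) (T (opow C B n))" using B by blast
  have E: "cross_pow C B (\<eta> B) n \<in> hom (opow C B n) (opow C (T B) n)" using B by blast
  have "samp C B n \<cdot> \<eta> B = kforcepow C B n \<cdot> diagn C (T B) n \<cdot> \<eta> B"
    using samp_eq[OF B] assoc[OF eta_in[OF B] diagn_in[OF T_ob[OF B]] F] by simp
  also have "\<dots> = (kforcepow C B n \<cdot> cross_pow C B (\<eta> B) n) \<cdot> diagn C B n"
    using diagn_natural[OF eta_in[OF B]] assoc[OF diagn_in[OF B] E F] by simp
  also have "\<dots> = \<eta> (opow C B n) \<cdot> diagn C B n" using kforcepow_cross_pow_eta[OF B] by simp
  finally show ?thesis .
qed

lemma kcomp_samp_Tm_eta: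
  assumes B: "B \<in> ob" and f: "f \<in> hom A (T B)"
  shows "kcomp C (opow C B n) (samp C B n) (Tm (\<eta> B) \<cdot> f) = Tm (diagn C B n) \<cdot> f"
  using kcomp_Tm[OF opow_ob[OF B] samp_in[OF B] eta_in[OF B] f] samp_eta[OF B]
    pure_kcomp[OF opow_ob[OF B] diagn_in[OF B] f] by simp

lemma kforcepow_diagn_comp:
  assumes B: "B \<in> ob" and f: "f \<in> hom A (T B)"
    and copy: "Tm (pair (idm B) (idm B)) \<cdot> f = nabla C B B \<cdot> pair f f"
    and del: "Tm (bang B) \<cdot> f = \<eta> one \<cdot> bang A"
  shows "kforcepow C B n \<cdot> diagn C (T B) n \<cdot> f = Tm (diagn C B n) \<cdot> f"
proof (induction n)
  case 0
  have "bang (T B) \<cdot> f = bang A" using f B by (intro bang_unique) blast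
  then show ?case using del by simp
next
  case (Suc n)
  have TB: "T B \<in> ob" and Bn: "opow C B n \<in> ob" using B by blast+
  have F: "kforcepow C B n \<in> hom (opow C (T B) n) (T (opow C B n))" using B by blast
  have D: "diagn C (T B) n \<in> hom (T B) (opow C (T B) n)" using TB by blast
  have DB: "diagn C B n \<in> hom B (opow C B n)" using B by blast
  have FT: "cross C (opow C (T B) n) (T B) (kforcepow C B n) (idm (T B))
      \<in> hom (pr (opow C (T B) n) (T B)) (pr (T (opow C B n)) (T B))" using F TB by blast
  have Df: "pair (diagn C (T B) n) (idm (T B)) \<cdot> f \<in> hom A (pr (opow C (T B) n) (T B))"
    using D TB f by blast
  have ff: "pair f f \<in> hom A (pr (T B) (T B))" using f by blast
  have DT: "cross C (T B) (T B) (Tm (diagn C B n)) (idm (T B))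
      \<in> hom (pr (T B) (T B)) (pr (T (opow C B n)) (T B))" using DB TB by blast
  have DI: "cross C B B (diagn C B n) (idm B) \<in> hom (pr B B) (pr (opow C B n) B)" using DB B by blast
  have dB: "pair (idm B) (idm B) \<in> hom B (pr B B)" using B by blast
  have "kforcepow C B (Suc n) \<cdot> diagn C (T B) (Suc n) \<cdot> f
     = nabla C (opow C B n) B \<cdot> cross C (opow C (T B) n) (T B) (kforcepow C B n) (idm (T B))
         \<cdot> pair (diagn C (T B) n) (idm (T B)) \<cdot> f"
    unfolding kforcepow.simps diagn.simps ktensor_def using assoc[OF Df FT nabla_in[OF Bn B]] by simp
  also have "pair (diagn C (T B) n) (idm (T B)) \<cdot> f = pair (diagn C (T B) n \<cdot> f) f"
    using pair_comp[OF D id_in[OF TB] f] id_l[OF f] by simp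
  also have "cross C (opow C (T B) n) (T B) (kforcepow C B n) (idm (T B))
      \<cdot> pair (diagn C (T B) n \<cdot> f) f = pair (Tm (diagn C B n) \<cdot> f) f"
    using cross_pair[OF F id_in[OF TB] comp_in[OF f D] f] Suc id_l[OF f] by simp
  also have "\<dots> = cross C (T B) (T B) (Tm (diagn C B n)) (idm (T B)) \<cdot> pair f f"
    using cross_pair[OF Tm_in[OF DB] id_in[OF TB] f f] id_l[OF f] by simp
  also have "nabla C (opow C B n) B \<cdot> \<dots>
      = (nabla C (opow C B n) B \<cdot> cross C (T B) (T B) (Tm (diagn C B n)) (idm (T B))) \<cdot> pair f f"
    using assoc[OF ff DT nabla_in[OF Bn B]] by simp
  also have "\<dots> = Tm (cross C B B (diagn C B n) (idm B)) \<cdot> nabla C B B \<cdot> pair f f"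
    using nabla_natural_left[OF DB B] assoc[OF ff nabla_in[OF B B] Tm_in[OF DI]] by simp
  also have "\<dots> = Tm (cross C B B (diagn C B n) (idm B) \<cdot> pair (idm B) (idm B)) \<cdot> f"
    using copy assoc[OF f Tm_in[OF dB] Tm_in[OF DI]] Tm_comp[OF dB DI] by simp
  also have "cross C B B (diagn C B n) (idm B) \<cdot> pair (idm B) (idm B) = diagn C B (Suc n)"
    using cross_pair[OF DB id_in[OF B] id_in[OF B] id_in[OF B]] id_r[OF DB] id_l[OF id_in[OF B]]
    by simp
  finally show ?case .
qed

lemma kcomp_samp_eta_deterministic:
  assumes B: "B \<in> ob" and f: "f \<in> hom A (T B)" and det: "deterministic C A B f"
  shows "kcomp C (opow C B n) (samp C B n) (\<eta> (T B) \<cdot> f) = Tm (diagn C B n) \<cdot> f"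
proof -
  have "kcomp C (opow C B n) (samp C B n) (\<eta> (T B) \<cdot> f) = kforcepow C B n \<cdot> diagn C (T B) n \<cdot> f"
    using kcomp_pure[OF opow_ob[OF B] samp_in[OF B] f] samp_eq[OF B]
      assoc[OF f diagn_in[OF T_ob[OF B]] kforcepow_in[OF B]] by simp
  also have "\<dots> = Tm (diagn C B n) \<cdot> f"
    using kforcepow_diagn_comp[OF B f] det copyable_iff[OF B f] discardable_iff[OF B f]
    unfolding deterministic_def by blast
  finally show ?thesis .
qed

end

theorem theorem7p1:
  fixes C :: "('o, 'm) cmonad"
  assumes "commutative_monad C"
      and "observational C"
      and "A \<in> c_ob C" and "B \<in> c_ob C"
      and "f \<in> c_hom C A (c_T C B)"
      and "deterministic C A B f"
  shows "thunkable C A B f"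
proof -
  interpret comm_monad C by (rule comm_monad.intro) fact
  have "kcomp C (opow C B n) (samp C B n) (Tm (\<eta> B) \<cdot> f)
      = kcomp C (opow C B n) (samp C B n) (\<eta> (T B) \<cdot> f)" for n
    using kcomp_samp_Tm_eta kcomp_samp_eta_deterministic assms(4-6) by simp
  moreover have "Tm (\<eta> B) \<cdot> f \<in> hom A (T (T B))" and "\<eta> (T B) \<cdot> f \<in> hom A (T (T B))"
    using assms(4,5) by blast+
  ultimately have "Tm (\<eta> B) \<cdot> f = \<eta> (T B) \<cdot> f"
    using \<open>observational C\<close> \<open>B \<in> ob\<close> unfolding observational_def by blast
  then show ?thesis using thunkable_iff assms(4,5) by simp
qed

end
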